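(* Let $S$ be a numerical semigroup with minimal generators $e<a_1<\dots<a_t$. For every $s\in S$, ${\rm d}_{\max}(s;S)$ equals the number of $B^{\mathcal D}$-factorizations of ${\rm adj}(s)$ of length at most ${\rm ord}(s;S)$.
   Context: A numerical semigroup is a submonoid of $(\mathbb N,+)$ with finite complement. An $S$-factorization of $n$ is $(c_0,\dots,c_t)\in\mathbb N^{t+1}$ with $c_0e+\sum c_ia_i=n$, of length $\sum c_i$. ${\rm ord}(n;S)$ is the maximal such length, and ${\rm d}_{\max}(n;S)$ is the number of $S$-factorizations of $n$ of length ${\rm ord}(n;S)$. Let $d_i=a_i-e$, $B=\langle e,d_1,\dots,d_t\rangle$, $\mathcal D=(e,d_1,\dots,d_t)$. A $B^{\mathcal D}$-factorization of $b$ is $(x_0,\dots,x_t)\in\mathbb N^{t+1}$ with $x_0e+\sum x_id_i=b$, of length $\sum x_i$. The adjustment is ${\rm adj}(s)=s-{\rm ord}(s;S)e$. *)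

theory Defs
  imports Main
begin

definition numerical_semigroup :: "nat set \<Rightarrow> bool" where
  "numerical_semigroup S \<longleftrightarrow> 0 \<in> S \<and> (\<forall>x\<in>S. \<forall>y\<in>S. x + y \<in> S) \<and> finite (UNIV - S)"

definition min_gens :: "nat set \<Rightarrow> nat set" where
  "min_gens S = {x \<in> S. x \<noteq> 0 \<and> \<not> (\<exists>y\<in>S. \<exists>z\<in>S. y \<noteq> 0 \<and> z \<noteq> 0 \<and> x = y + z)}"

definition facts :: "(nat \<Rightarrow> nat) \<Rightarrow> nat \<Rightarrow> nat \<Rightarrow> (nat \<Rightarrow> nat) set" where
  "facts g t n = {c. (\<forall>i>t. c i = 0) \<and> (\<Sum>i\<le>t. c i * g i) = n}"

definition flen :: "nat \<Rightarrow> (nat \<Rightarrow> nat) \<Rightarrow> nat" where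
  "flen t c = (\<Sum>i\<le>t. c i)"

definition Sgen :: "nat \<Rightarrow> (nat \<Rightarrow> nat) \<Rightarrow> nat \<Rightarrow> nat" where
  "Sgen e a i = (if i = 0 then e else a i)"

definition Dgen :: "nat \<Rightarrow> (nat \<Rightarrow> nat) \<Rightarrow> nat \<Rightarrow> nat" where
  "Dgen e a i = (if i = 0 then e else a i - e)"

definition ord_S :: "nat \<Rightarrow> (nat \<Rightarrow> nat) \<Rightarrow> nat \<Rightarrow> nat \<Rightarrow> nat" where
  "ord_S e a t n = Max (flen t ` facts (Sgen e a) t n)"

definition dmax :: "nat \<Rightarrow> (nat \<Rightarrow> nat) \<Rightarrow> nat \<Rightarrow> nat \<Rightarrow> nat" where
  "dmax e a t n = card {c \<in> facts (Sgen e a) t n. flen t c = ord_S e a t n}"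

definition adj :: "nat \<Rightarrow> (nat \<Rightarrow> nat) \<Rightarrow> nat \<Rightarrow> nat \<Rightarrow> nat" where
  "adj e a t s = s - ord_S e a t s * e"

end

theory Submission
  imports Defs
begin

text \<open>Since a_i = e + d_i, an S-factorization c of s satisfies
  s = |c| e + \<Sum>_{i\<ge>1} c_i d_i. For N = ord(s;S), deleting the e-coordinate of a
  factorization of maximal length N therefore gives a B^D-factorization of s - N e
  of length at most N, and the e-coordinate is recovered as N minus the remaining
  length. Conversely a B^D-factorization x of s - N e of length at most N yields an
  S-factorization of s of length N + x_0, so maximality of N forces x_0 = 0 and the
  two maps are mutually inverse.\<close>

definition tail_len :: "nat \<Rightarrow> (nat \<Rightarrow> nat) \<Rightarrow> nat" where
  "tail_len t c = (\<Sum>i\<in>{1..t}. c i)"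

definition tail_weight :: "nat \<Rightarrow> (nat \<Rightarrow> nat) \<Rightarrow> nat \<Rightarrow> (nat \<Rightarrow> nat) \<Rightarrow> nat" where
  "tail_weight e a t c = (\<Sum>i\<in>{1..t}. c i * (a i - e))"

lemma sum_atMost_split_0: "(\<Sum>i\<le>(t::nat). f i) = f 0 + (\<Sum>i\<in>{1..t}. f i :: 'a :: comm_monoid_add)"
  by (simp add: atMost_atLeast0 sum.atLeast_Suc_atMost One_nat_def)

lemma tail_len_upd_0 [simp]: "tail_len t (c(0 := v)) = tail_len t c"
  by (auto simp: tail_len_def intro!: sum.cong)

lemma tail_weight_upd_0 [simp]: "tail_weight e a t (c(0 := v)) = tail_weight e a t c"
  by (auto simp: tail_weight_def intro!: sum.cong)

lemma flen_eq_head_plus_tail_len: "flen t c = c 0 + tail_len t c"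
  by (simp add: flen_def tail_len_def sum_atMost_split_0)

lemma zero_in_facts: "(\<lambda>_. 0) \<in> facts g t 0"
  by (simp add: facts_def)

lemma unit_in_facts:
  assumes "k \<le> t"
  shows "(\<lambda>i. if i = k then 1 else 0) \<in> facts g t (g k)"
proof -
  have "(\<Sum>i\<le>t. (if i = k then 1 else 0) * g i) = (\<Sum>i\<le>t. if i = k then g i else 0)"
    by (intro sum.cong) auto
  then show ?thesis using assms by (auto simp: facts_def)
qed

lemma add_in_facts:
  assumes "c \<in> facts g t m" "c' \<in> facts g t n"
  shows "(\<lambda>i. c i + c' i) \<in> facts g t (m + n)"
  using assms by (simp add: facts_def algebra_simps sum.distrib)

lemma facts_nonempty_if_min_gens:
  assumes "min_gens S \<subseteq> g ` {..t}" and "s \<in> S"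
  shows "facts g t s \<noteq> {}"
  using assms(2)
proof (induction s rule: less_induct)
  case (less s)
  consider "s = 0" | "s \<in> min_gens S" | "s \<noteq> 0" "s \<notin> min_gens S" by blast
  then show ?case
  proof cases
    case 1
    then show ?thesis using zero_in_facts by blast
  next
    case 2
    then obtain k where "k \<le> t" "s = g k" using assms(1) by auto
    then show ?thesis using unit_in_facts by blast
  next
    case 3
    then obtain y z where "y \<in> S" "z \<in> S" "y \<noteq> 0" "z \<noteq> 0" "s = y + z"
      using less.prems by (auto simp: min_gens_def)
    with less.IH obtain c c' where "c \<in> facts g t y" "c' \<in> facts g t z" by fastforce
    then show ?thesis using add_in_facts \<open>s = y + z\<close> by blast
  qed
qed

lemma flen_le_of_facts:
  assumes "\<And>i. i \<le> t \<Longrightarrow> 0 < g i" and "c \<in> facts g t n"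
  shows "flen t c \<le> n"
proof -
  have "flen t c \<le> (\<Sum>i\<le>t. c i * g i)"
    unfolding flen_def using assms(1) by (intro sum_mono) (simp add: Suc_le_eq)
  then show ?thesis using assms(2) by (simp add: facts_def)
qed

lemma finite_flen_facts:
  assumes "\<And>i. i \<le> t \<Longrightarrow> 0 < g i"
  shows "finite (flen t ` facts g t n)"
proof (rule finite_subset)
  show "flen t ` facts g t n \<subseteq> {..n}"
    using flen_le_of_facts[OF assms] by auto
qed simp

locale shifted_gens =
  fixes e t :: nat and a :: "nat \<Rightarrow> nat"
  assumes e_pos: "0 < e"
    and e_le_gens: "\<And>i. 1 \<le> i \<Longrightarrow> i \<le> t \<Longrightarrow> e \<le> a i"
begin

lemma Sgen_weight:
  "(\<Sum>i\<le>t. c i * Sgen e a i) = flen t c * e + tail_weight e a t c"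
proof -
  have "(\<Sum>i\<le>t. c i * Sgen e a i) = c 0 * e + (\<Sum>i\<in>{1..t}. c i * Sgen e a i)"
    by (simp add: sum_atMost_split_0 Sgen_def)
  also have "(\<Sum>i\<in>{1..t}. c i * Sgen e a i) = (\<Sum>i\<in>{1..t}. c i * e + c i * (a i - e))"
    by (intro sum.cong) (auto simp: Sgen_def e_le_gens simp flip: add_mult_distrib2)
  also have "\<dots> = tail_len t c * e + tail_weight e a t c"
    by (simp add: sum.distrib sum_distrib_right tail_len_def tail_weight_def)
  finally show ?thesis
    by (simp add: flen_eq_head_plus_tail_len add_mult_distrib)
qed

lemma Dgen_weight:
  "(\<Sum>i\<le>t. x i * Dgen e a i) = x 0 * e + tail_weight e a t x"
  by (simp add: sum_atMost_split_0 tail_weight_def Dgen_def)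

lemma Sfacts_iff:
  "c \<in> facts (Sgen e a) t s \<longleftrightarrow> (\<forall>i>t. c i = 0) \<and> flen t c * e + tail_weight e a t c = s"
  by (simp add: facts_def Sgen_weight)

lemma Dfacts_iff:
  "x \<in> facts (Dgen e a) t b \<longleftrightarrow> (\<forall>i>t. x i = 0) \<and> x 0 * e + tail_weight e a t x = b"
  by (simp add: facts_def Dgen_weight)

lemma Sgen_pos: "i \<le> t \<Longrightarrow> 0 < Sgen e a i"
  using e_pos e_le_gens[of i] by (cases "i = 0") (auto simp: Sgen_def)

lemma finite_flen_Sfacts: "finite (flen t ` facts (Sgen e a) t s)"
  using Sgen_pos by (rule finite_flen_facts)

lemma flen_le_ord_S:
  "c \<in> facts (Sgen e a) t s \<Longrightarrow> flen t c \<le> ord_S e a t s"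
  unfolding ord_S_def using finite_flen_Sfacts by simp

lemma ord_S_attained:
  assumes "facts (Sgen e a) t s \<noteq> {}"
  obtains c where "c \<in> facts (Sgen e a) t s" "flen t c = ord_S e a t s"
proof -
  have "ord_S e a t s \<in> flen t ` facts (Sgen e a) t s"
    unfolding ord_S_def using finite_flen_Sfacts assms by (intro Max_in) auto
  then show ?thesis using that by (auto simp: image_iff)
qed

lemma ord_S_mult_le:
  assumes "facts (Sgen e a) t s \<noteq> {}"
  shows "ord_S e a t s * e \<le> s"
proof -
  obtain c where "c \<in> facts (Sgen e a) t s" "flen t c = ord_S e a t s"
    using ord_S_attained[OF assms] .
  then show ?thesis by (simp add: Sfacts_iff)
qed

lemma head_zero_of_short_Dfacts:
  assumes "x \<in> facts (Dgen e a) t (adj e a t s)" "flen t x \<le> ord_S e a t s"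
    and "facts (Sgen e a) t s \<noteq> {}"
  shows "x 0 = 0"
proof -
  let ?N = "ord_S e a t s"
  have x: "\<forall>i>t. x i = 0" "x 0 * e + tail_weight e a t x = s - ?N * e"
      "x 0 + tail_len t x \<le> ?N"
    using assms(1,2) by (simp_all add: Dfacts_iff adj_def flen_eq_head_plus_tail_len)
  define c where "c = x(0 := ?N + x 0 - tail_len t x)"
  have len_c: "flen t c = ?N + x 0"
    using x(3) by (simp add: c_def flen_eq_head_plus_tail_len)
  have "(?N + x 0) * e + tail_weight e a t c = s"
    using x(2) ord_S_mult_le[OF assms(3)] by (simp add: c_def add_mult_distrib)
  then have "c \<in> facts (Sgen e a) t s"
    using x(1) len_c by (simp add: Sfacts_iff c_def)
  then show ?thesis using flen_le_ord_S len_c by fastforce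
qed

lemma dmax_eq_card_short_Dfacts:
  assumes "facts (Sgen e a) t s \<noteq> {}"
  shows "dmax e a t s =
         card {x \<in> facts (Dgen e a) t (adj e a t s). flen t x \<le> ord_S e a t s}"
    (is "_ = card ?B")
proof -
  let ?N = "ord_S e a t s"
  let ?A = "{c \<in> facts (Sgen e a) t s. flen t c = ?N}"
  have Ne: "?N * e \<le> s" using ord_S_mult_le[OF assms] .
  have "bij_betw (\<lambda>c. c(0 := 0)) ?A ?B"
  proof (rule bij_betw_byWitness[where f' = "\<lambda>x. x(0 := ?N - tail_len t x)"])
    show "\<forall>c\<in>?A. (c(0 := 0))(0 := ?N - tail_len t (c(0 := 0))) = c"
      by (auto simp: flen_eq_head_plus_tail_len intro!: ext)
    show "\<forall>x\<in>?B. (x(0 := ?N - tail_len t x))(0 := 0) = x"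
      using head_zero_of_short_Dfacts[OF _ _ assms] by auto
    show "(\<lambda>c. c(0 := 0)) ` ?A \<subseteq> ?B"
      by (auto simp: Sfacts_iff Dfacts_iff adj_def flen_eq_head_plus_tail_len)
    show "(\<lambda>x. x(0 := ?N - tail_len t x)) ` ?B \<subseteq> ?A"
    proof
      fix y assume "y \<in> (\<lambda>x. x(0 := ?N - tail_len t x)) ` ?B"
      then obtain x where x: "x \<in> ?B" and y: "y = x(0 := ?N - tail_len t x)" by blast
      then have "x 0 = 0" using head_zero_of_short_Dfacts[OF _ _ assms] by blast
      with x Ne show "y \<in> ?A"
        by (auto simp: y Sfacts_iff Dfacts_iff adj_def flen_eq_head_plus_tail_len)
    qed
  qed
  then show ?thesis unfolding dmax_def by (rule bij_betw_same_card)
qed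

end

theorem proposition3p3:
  fixes S :: "nat set" and e t :: nat and a :: "nat \<Rightarrow> nat" and s :: nat
  assumes "numerical_semigroup S"
    and "min_gens S = insert e (a ` {1..t})"
    and "t \<ge> 1 \<Longrightarrow> e < a 1"
    and "\<And>i j. 1 \<le> i \<Longrightarrow> i < j \<Longrightarrow> j \<le> t \<Longrightarrow> a i < a j"
    and "s \<in> S"
  shows "dmax e a t s =
         card {x \<in> facts (Dgen e a) t (adj e a t s). flen t x \<le> ord_S e a t s}"
proof -
  have "0 < e" using assms(2) by (auto simp: min_gens_def)
  moreover have "e \<le> a i" if "1 \<le> i" "i \<le> t" for i
    using assms(3) assms(4)[of 1 i] that by (cases "i = 1") auto
  ultimately interpret shifted_gens e t a by unfold_locales
  have "Sgen e a ` {1..t} = a ` {1..t}"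
    by (intro image_cong) (auto simp: Sgen_def)
  then have "min_gens S = Sgen e a ` insert 0 {1..t}"
    using assms(2) by (simp add: Sgen_def[where i = 0])
  then have "min_gens S \<subseteq> Sgen e a ` {..t}" by auto
  then have "facts (Sgen e a) t s \<noteq> {}"
    using assms(5) by (rule facts_nonempty_if_min_gens)
  then show ?thesis by (rule dmax_eq_card_short_Dfacts)
qed

end
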